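(* Let $c,\rho>0$ and let $\{(\mathbf z^t,\mathbf w^t,\boldsymbol\lambda^t)\}_{t\ge0}$ be generated by Algorithm SP-ADMM-JCNL. Then for all $t\ge1$, $$\mathcal L(\mathbf z^{t+1},\mathbf w^{t+1},\boldsymbol\lambda^{t+1})-\mathcal L(\mathbf z^t,\mathbf w^t,\boldsymbol\lambda^t)\le\sum_{i\in\mathcal N}\Big[-\tfrac c2\|\Delta\mathbf z_i^{t+1}\|^2_{\mathbf S_i}-\tfrac\rho2\|\Delta\mathbf w_i^{t+1}\|^2+\tfrac{3(N_{\max}+2)}{c}\|\mathbf H_i\Delta\tilde{\mathbf z}_i^{t+1}-\mathbf D_i\Delta\mathbf w_i^t\|^2+3c(2N_{\max}+1)\|\Delta\tilde{\mathbf z}_i^{t+1}-\Delta\mathbf z_i^{t+1}\|^2_{\mathbf A_i^T\mathbf A_i}+3(1+2c)(2+N_{\max})\|\Delta\tilde{\mathbf z}_i^{t+1}-\Delta\mathbf z_i^{t}\|^2_{\mathbf S_i}\Big],$$ where $N_{\max}=\max_{i}N_i$.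
   Context: $G=(\mathcal N,\mathcal E)$ is a connected undirected graph on $\mathcal N=\{1,\dots,N\}$, $\mathcal N_i=\{j:(i,j)\in\mathcal E\}$, $N_i=|\mathcal N_i|\ge1$ (neighbors listed in a fixed order). $\mathcal A\subseteq\mathcal N$ is a nonempty set of anchors with known positions $\mathbf a_k\in\mathbb R^n$. Measurements $d_{i,j}=d_{j,i}\ge0$ ($j\in\mathcal N_i$) and $r_i\ge0$. $\mathcal B^{k}$ is the product of $k$ closed Euclidean unit balls of $\mathbb R^n$; $\delta_C$ is the indicator function of $C$. Variables: $\mathbf z_i=(\mathbf x_i,\mathbf p_i^-,\mathbf p_i^+,\mathbf y_i,\mathbf q_i^-,\mathbf q_i^+)\in\mathbb R^{(4N_i+2)n}$ with $\mathbf p_i^\pm=(\mathbf p^\pm_{i,j})_{j\in\mathcal N_i}$, $\mathbf q_i^\pm=(\mathbf q^\pm_{i,j})_{j\in\mathcal N_i}$ (blocks in $\mathbb R^n$), $\mathbf z=(\mathbf z_i)_i$; $\mathbf w_i=((\mathbf v_{i,j})_{j\in\mathcal N_i},\mathbf u_i)\in\mathbb R^{(N_i+1)n}$, $\mathbf w=(\mathbf w_i)_i$; $\boldsymbol\lambda_i\in\mathbb R^{3N_in}$. Linear maps (identified with their matrices): $\mathbf H_i\mathbf z_i=((\mathbf x_i-\mathbf p^+_{i,j})_{j},\mathbf x_i-\mathbf y_i)$, $\mathbf A_i\mathbf z_i=((\mathbf x_i-\mathbf p^-_{i,j})_j,(\mathbf y_i-\mathbf q^-_{i,j})_j,(\mathbf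 y_i-\mathbf q^+_{i,j})_j)$, $\mathbf D_i=\mathrm{Diag}((d_{i,j})_{j\in\mathcal N_i},r_i)\otimes\mathbf I_n$. $G_i(\mathbf z_i,\mathbf w_i)=\frac12\|\mathbf H_i\mathbf z_i\|^2-\mathbf w_i^T\mathbf D_i\mathbf H_i\mathbf z_i$. $\mathcal X=\{\mathbf z:\mathbf x_i=\mathbf a_i\ \forall i\in\mathcal A\}$, $\mathcal Y=\{\mathbf z:\mathbf p^+_{i,j}=\mathbf p^-_{j,i},\ \mathbf q^+_{i,j}=\mathbf q^-_{j,i}\ \forall i,\ j\in\mathcal N_i\}$. $|\mathbf M|$ is the entrywise absolute value, $\|\mathbf v\|^2_{\mathbf M}=\mathbf v^T\mathbf M\mathbf v$, $\mathbf S_i=|\mathbf A_i^T\mathbf A_i|+\frac1c|\mathbf H_i^T\mathbf H_i|$, $\mathbf U_i=\mathbf H_i^T\mathbf H_i+c\mathbf A_i^T\mathbf A_i+c\mathbf S_i$ (a positive definite diagonal matrix). Augmented Lagrangian: $\mathcal L_i(\mathbf z_i,\mathbf w_i,\boldsymbol\lambda_i)=G_i(\mathbf z_i,\mathbf w_i)+\delta_{\mathcal B^{N_i+1}}(\mathbf w_i)+\langle\boldsymbol\lambda_i,\mathbf A_i\mathbf z_i\rangle+\frac c2\|\mathbf A_i\mathbf z_i\|^2$, $\mathcal L=\sum_i\mathcal L_i$. Algorithm SP-ADMM-JCNL (parameters $c,\rho>0$; arbitrary $\mathbf z^0,\mathbf w^0$, $\boldsymbol\lambda^0=\mathbf 0$):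 for $t\ge0$, $\mathbf z^{t+1}=\arg\min_{\mathbf z\in\mathcal X\cap\mathcal Y}\sum_i[\mathcal L_i(\mathbf z_i,\mathbf w_i^t,\boldsymbol\lambda_i^t)+\frac c2\|\mathbf z_i-\mathbf z_i^t\|^2_{\mathbf S_i}]$; $\mathbf w^{t+1}=\arg\min_{\mathbf w}\sum_i[\mathcal L_i(\mathbf z_i^{t+1},\mathbf w_i,\boldsymbol\lambda_i^t)+\frac\rho2\|\mathbf w_i-\mathbf w_i^t\|^2]$, i.e. $\mathbf w_i^{t+1}=\mathrm{proj}_{\mathcal B^{N_i+1}}(\mathbf w_i^t+\rho^{-1}\mathbf D_i\mathbf H_i\mathbf z_i^{t+1})$; $\boldsymbol\lambda_i^{t+1}=\boldsymbol\lambda_i^t+c\mathbf A_i\mathbf z_i^{t+1}$. Auxiliary sequence: $\tilde{\mathbf z}_i^{t+1}=\mathbf U_i^{-1}(\mathbf H_i^T\mathbf D_i\mathbf w_i^t-\mathbf A_i^T\boldsymbol\lambda_i^t+c\mathbf S_i\mathbf z_i^t)$ for $t\ge0$. Increments: $\Delta\mathbf z_i^t=\mathbf z_i^t-\mathbf z_i^{t-1}$, $\Delta\mathbf w_i^t=\mathbf w_i^t-\mathbf w_i^{t-1}$, $\Delta\tilde{\mathbf z}_i^t=\tilde{\mathbf z}_i^t-\tilde{\mathbf z}_i^{t-1}$, $\Delta\boldsymbol\lambda_i^t=\boldsymbol\lambda_i^t-\boldsymbol\lambda_i^{t-1}$. *)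

theory Defs
  imports "HOL-Analysis.Analysis"
begin

text \<open>Nodes are 1..N (natural numbers). Blocks of the per-node variables are indexed
by the datatypes below; the index j of a block refers to the neighbour j.
Every linear map of the paper is of the form K \<otimes> I_n with a scalar block matrix K;
we store K as a function of two block indices.\<close>

datatype blk = BX | BPm nat | BPp nat | BY | BQm nat | BQp nat
  \<comment> \<open>blocks of z_i: x_i, p^-_{i,j}, p^+_{i,j}, y_i, q^-_{i,j}, q^+_{i,j}\<close>
datatype hblk = HP nat | HR
  \<comment> \<open>blocks of H_i z_i and of w_i: (v_{i,j})_j and u_i\<close>
datatype ablk = A1 nat | A2 nat | A3 nat
  \<comment> \<open>blocks of A_i z_i and of lambda_i\<close>

definition nbrs :: "(nat \<times> nat) set \<Rightarrow> nat \<Rightarrow> nat set" where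
  "nbrs E i = {j. (i, j) \<in> E}"

definition zblks :: "(nat \<times> nat) set \<Rightarrow> nat \<Rightarrow> blk set" where
  "zblks E i = {BX, BY} \<union> BPm ` nbrs E i \<union> BPp ` nbrs E i \<union> BQm ` nbrs E i \<union> BQp ` nbrs E i"

definition hblks :: "(nat \<times> nat) set \<Rightarrow> nat \<Rightarrow> hblk set" where
  "hblks E i = HP ` nbrs E i \<union> {HR}"

definition ablks :: "(nat \<times> nat) set \<Rightarrow> nat \<Rightarrow> ablk set" where
  "ablks E i = A1 ` nbrs E i \<union> A2 ` nbrs E i \<union> A3 ` nbrs E i"

fun Hc :: "hblk \<Rightarrow> blk \<Rightarrow> real" where
  "Hc (HP j) b = (if b = BX then 1 else if b = BPp j then -1 else 0)"
| "Hc HR b = (if b = BX then 1 else if b = BY then -1 else 0)"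

fun Ac :: "ablk \<Rightarrow> blk \<Rightarrow> real" where
  "Ac (A1 j) b = (if b = BX then 1 else if b = BPm j then -1 else 0)"
| "Ac (A2 j) b = (if b = BY then 1 else if b = BQm j then -1 else 0)"
| "Ac (A3 j) b = (if b = BY then 1 else if b = BQp j then -1 else 0)"

definition Hmul :: "(nat \<times> nat) set \<Rightarrow> nat \<Rightarrow> (blk \<Rightarrow> real^'n) \<Rightarrow> hblk \<Rightarrow> real^'n" where
  "Hmul E i v = (\<lambda>r. \<Sum>b\<in>zblks E i. Hc r b *\<^sub>R v b)"

definition Amul :: "(nat \<times> nat) set \<Rightarrow> nat \<Rightarrow> (blk \<Rightarrow> real^'n) \<Rightarrow> ablk \<Rightarrow> real^'n" where
  "Amul E i v = (\<lambda>r. \<Sum>b\<in>zblks E i. Ac r b *\<^sub>R v b)"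

definition HTmul :: "(nat \<times> nat) set \<Rightarrow> nat \<Rightarrow> (hblk \<Rightarrow> real^'n) \<Rightarrow> blk \<Rightarrow> real^'n" where
  "HTmul E i u = (\<lambda>b. \<Sum>r\<in>hblks E i. Hc r b *\<^sub>R u r)"

definition ATmul :: "(nat \<times> nat) set \<Rightarrow> nat \<Rightarrow> (ablk \<Rightarrow> real^'n) \<Rightarrow> blk \<Rightarrow> real^'n" where
  "ATmul E i u = (\<lambda>b. \<Sum>r\<in>ablks E i. Ac r b *\<^sub>R u r)"

definition HtH :: "(nat \<times> nat) set \<Rightarrow> nat \<Rightarrow> blk \<Rightarrow> blk \<Rightarrow> real" where
  "HtH E i b b' = (\<Sum>r\<in>hblks E i. Hc r b * Hc r b')"

definition AtA :: "(nat \<times> nat) set \<Rightarrow> nat \<Rightarrow> blk \<Rightarrow> blk \<Rightarrow> real" where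
  "AtA E i b b' = (\<Sum>r\<in>ablks E i. Ac r b * Ac r b')"

definition Smat :: "real \<Rightarrow> (nat \<times> nat) set \<Rightarrow> nat \<Rightarrow> blk \<Rightarrow> blk \<Rightarrow> real" where
  "Smat c E i b b' = \<bar>AtA E i b b'\<bar> + (1 / c) * \<bar>HtH E i b b'\<bar>"

definition Umat :: "real \<Rightarrow> (nat \<times> nat) set \<Rightarrow> nat \<Rightarrow> blk \<Rightarrow> blk \<Rightarrow> real" where
  "Umat c E i b b' = HtH E i b b' + c * AtA E i b b' + c * Smat c E i b b'"

definition mmul :: "(nat \<times> nat) set \<Rightarrow> nat \<Rightarrow> (blk \<Rightarrow> blk \<Rightarrow> real) \<Rightarrow> (blk \<Rightarrow> real^'n) \<Rightarrow> blk \<Rightarrow> real^'n" where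
  "mmul E i M v = (\<lambda>b. \<Sum>b'\<in>zblks E i. M b b' *\<^sub>R v b')"

definition qform :: "(nat \<times> nat) set \<Rightarrow> nat \<Rightarrow> (blk \<Rightarrow> blk \<Rightarrow> real) \<Rightarrow> (blk \<Rightarrow> real^'n) \<Rightarrow> real" where
  "qform E i M v = (\<Sum>b\<in>zblks E i. \<Sum>b'\<in>zblks E i. M b b' * (v b \<bullet> v b'))"

definition hnorm2 :: "(nat \<times> nat) set \<Rightarrow> nat \<Rightarrow> (hblk \<Rightarrow> real^'n) \<Rightarrow> real" where
  "hnorm2 E i u = (\<Sum>r\<in>hblks E i. (norm (u r))\<^sup>2)"

definition anorm2 :: "(nat \<times> nat) set \<Rightarrow> nat \<Rightarrow> (ablk \<Rightarrow> real^'n) \<Rightarrow> real" where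
  "anorm2 E i u = (\<Sum>r\<in>ablks E i. (norm (u r))\<^sup>2)"

definition hinner :: "(nat \<times> nat) set \<Rightarrow> nat \<Rightarrow> (hblk \<Rightarrow> real^'n) \<Rightarrow> (hblk \<Rightarrow> real^'n) \<Rightarrow> real" where
  "hinner E i u u' = (\<Sum>r\<in>hblks E i. u r \<bullet> u' r)"

definition ainner :: "(nat \<times> nat) set \<Rightarrow> nat \<Rightarrow> (ablk \<Rightarrow> real^'n) \<Rightarrow> (ablk \<Rightarrow> real^'n) \<Rightarrow> real" where
  "ainner E i u u' = (\<Sum>r\<in>ablks E i. u r \<bullet> u' r)"

definition Dmul :: "(nat \<Rightarrow> nat \<Rightarrow> real) \<Rightarrow> (nat \<Rightarrow> real) \<Rightarrow> nat \<Rightarrow> (hblk \<Rightarrow> real^'n) \<Rightarrow> hblk \<Rightarrow> real^'n" where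
  "Dmul d rr i u = (\<lambda>k. (case k of HP j \<Rightarrow> d i j | HR \<Rightarrow> rr i) *\<^sub>R u k)"

definition Gfun :: "(nat \<times> nat) set \<Rightarrow> (nat \<Rightarrow> nat \<Rightarrow> real) \<Rightarrow> (nat \<Rightarrow> real) \<Rightarrow> nat
    \<Rightarrow> (blk \<Rightarrow> real^'n) \<Rightarrow> (hblk \<Rightarrow> real^'n) \<Rightarrow> real" where
  "Gfun E d rr i zi wi = 1/2 * hnorm2 E i (Hmul E i zi) - hinner E i wi (Dmul d rr i (Hmul E i zi))"

text \<open>Finite (smooth) part of the augmented Lagrangian L_i (without the indicator).\<close>
definition Lsm :: "real \<Rightarrow> (nat \<times> nat) set \<Rightarrow> (nat \<Rightarrow> nat \<Rightarrow> real) \<Rightarrow> (nat \<Rightarrow> real) \<Rightarrow> nat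
    \<Rightarrow> (blk \<Rightarrow> real^'n) \<Rightarrow> (hblk \<Rightarrow> real^'n) \<Rightarrow> (ablk \<Rightarrow> real^'n) \<Rightarrow> real" where
  "Lsm c E d rr i zi wi li = Gfun E d rr i zi wi + ainner E i li (Amul E i zi)
      + c / 2 * anorm2 E i (Amul E i zi)"

definition in_balls :: "(nat \<times> nat) set \<Rightarrow> nat \<Rightarrow> (hblk \<Rightarrow> real^'n) \<Rightarrow> bool" where
  "in_balls E i wi \<longleftrightarrow> (\<forall>k\<in>hblks E i. norm (wi k) \<le> 1)"

definition Lag :: "real \<Rightarrow> nat \<Rightarrow> (nat \<times> nat) set \<Rightarrow> (nat \<Rightarrow> nat \<Rightarrow> real) \<Rightarrow> (nat \<Rightarrow> real)
    \<Rightarrow> (nat \<Rightarrow> blk \<Rightarrow> real^'n) \<Rightarrow> (nat \<Rightarrow> hblk \<Rightarrow> real^'n) \<Rightarrow> (nat \<Rightarrow> ablk \<Rightarrow> real^'n) \<Rightarrow> ereal" where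
  "Lag c N E d rr z w l =
     (if (\<forall>i\<in>{1..N}. in_balls E i (w i))
      then ereal (\<Sum>i\<in>{1..N}. Lsm c E d rr i (z i) (w i) (l i)) else \<infinity>)"

definition Xset :: "nat set \<Rightarrow> (nat \<Rightarrow> real^'n) \<Rightarrow> (nat \<Rightarrow> blk \<Rightarrow> real^'n) set" where
  "Xset Anc a = {z. \<forall>i\<in>Anc. z i BX = a i}"

definition Yset :: "nat \<Rightarrow> (nat \<times> nat) set \<Rightarrow> (nat \<Rightarrow> blk \<Rightarrow> real^'n) set" where
  "Yset N E = {z. \<forall>i\<in>{1..N}. \<forall>j\<in>nbrs E i. z i (BPp j) = z j (BPm i) \<and> z i (BQp j) = z j (BQm i)}"

text \<open>Objective of the z-subproblem at iteration t (the constant indicator term of w^t is dropped).\<close>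
definition zobj :: "real \<Rightarrow> nat \<Rightarrow> (nat \<times> nat) set \<Rightarrow> (nat \<Rightarrow> nat \<Rightarrow> real) \<Rightarrow> (nat \<Rightarrow> real)
    \<Rightarrow> (nat \<Rightarrow> blk \<Rightarrow> real^'n) \<Rightarrow> (nat \<Rightarrow> hblk \<Rightarrow> real^'n) \<Rightarrow> (nat \<Rightarrow> ablk \<Rightarrow> real^'n)
    \<Rightarrow> (nat \<Rightarrow> blk \<Rightarrow> real^'n) \<Rightarrow> real" where
  "zobj c N E d rr zt wt lt z =
     (\<Sum>i\<in>{1..N}. Lsm c E d rr i (z i) (wt i) (lt i) + c / 2 * qform E i (Smat c E i) (z i - zt i))"

text \<open>Algorithm SP-ADMM-JCNL (projection onto B^{N_i+1} is blockwise projection onto unit balls).\<close>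
definition sp_admm_jcnl :: "real \<Rightarrow> real \<Rightarrow> nat \<Rightarrow> (nat \<times> nat) set \<Rightarrow> nat set \<Rightarrow> (nat \<Rightarrow> real^'n)
    \<Rightarrow> (nat \<Rightarrow> nat \<Rightarrow> real) \<Rightarrow> (nat \<Rightarrow> real)
    \<Rightarrow> (nat \<Rightarrow> nat \<Rightarrow> blk \<Rightarrow> real^'n) \<Rightarrow> (nat \<Rightarrow> nat \<Rightarrow> hblk \<Rightarrow> real^'n) \<Rightarrow> (nat \<Rightarrow> nat \<Rightarrow> ablk \<Rightarrow> real^'n)
    \<Rightarrow> bool" where
  "sp_admm_jcnl c \<rho> N E Anc a d rr z w l \<longleftrightarrow>
     (\<forall>i\<in>{1..N}. \<forall>k\<in>ablks E i. l 0 i k = 0) \<and>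
     (\<forall>t. z (Suc t) \<in> Xset Anc a \<inter> Yset N E \<and>
          (\<forall>z'\<in>Xset Anc a \<inter> Yset N E.
              zobj c N E d rr (z t) (w t) (l t) (z (Suc t)) \<le> zobj c N E d rr (z t) (w t) (l t) z')) \<and>
     (\<forall>t. \<forall>i\<in>{1..N}. \<forall>k\<in>hblks E i.
          w (Suc t) i k = closest_point (cball 0 1)
             (w t i k + (1 / \<rho>) *\<^sub>R Dmul d rr i (Hmul E i (z (Suc t) i)) k)) \<and>
     (\<forall>t. \<forall>i\<in>{1..N}. \<forall>k\<in>ablks E i.
          l (Suc t) i k = l t i k + c *\<^sub>R Amul E i (z (Suc t) i) k)"

text \<open>Auxiliary point: tilde z_i^{t+1} = U_i^{-1}(H_i^T D_i w_i^t - A_i^T lambda_i^t + c S_i z_i^t),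
  computed from (z^t, w^t, lambda^t); U_i is diagonal, so U_i^{-1} divides by its diagonal.\<close>
definition ztil :: "real \<Rightarrow> (nat \<times> nat) set \<Rightarrow> (nat \<Rightarrow> nat \<Rightarrow> real) \<Rightarrow> (nat \<Rightarrow> real) \<Rightarrow> nat
    \<Rightarrow> (blk \<Rightarrow> real^'n) \<Rightarrow> (hblk \<Rightarrow> real^'n) \<Rightarrow> (ablk \<Rightarrow> real^'n) \<Rightarrow> blk \<Rightarrow> real^'n" where
  "ztil c E d rr i zi wi li =
     (\<lambda>b. (1 / Umat c E i b b) *\<^sub>R
        (HTmul E i (Dmul d rr i wi) b - ATmul E i li b + c *\<^sub>R mmul E i (Smat c E i) zi b))"

end

theory Submission
  imports Defs
begin

text \<open>The z-update minimises a proximal model over a set containing z^t (for t \<ge> 1), so it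
  decreases L by at least c/2 ||\<Delta>z^{t+1}||^2_S. The w-update is a projected gradient step on a
  function that is linear in w, so it decreases L by at least \<rho> ||\<Delta>w^{t+1}||^2. The multiplier
  update increases L by c ||A_i z^{t+1}||^2. Because U_i is diagonal, the definition of the
  auxiliary point expresses c A_i^T A_i z^{t+1} as a sum of three residuals, and bounding the
  norms of H_i^T, A_i^T A_i and S_i blockwise by the number of neighbours yields the three
  error terms.\<close>

section \<open>Elementary inequalities\<close>

lemma norm_sum_power2_le:
  fixes x :: "'k \<Rightarrow> 'a::real_normed_vector"
  shows "(norm (\<Sum>k\<in>K. x k))\<^sup>2 \<le> real (card K) * (\<Sum>k\<in>K. (norm (x k))\<^sup>2)"
proof -
  have "(norm (\<Sum>k\<in>K. x k))\<^sup>2 \<le> (\<Sum>k\<in>K. norm (x k))\<^sup>2"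
    by (rule power_mono[OF norm_sum]) simp
  also have "\<dots> \<le> (\<Sum>k\<in>K. (norm (x k))\<^sup>2) * card K"
    by (rule sum_squared_le_sum_of_squares)
  finally show ?thesis by (simp add: mult.commute)
qed

lemma norm_add3_power2_le:
  fixes a b c :: "'a::real_normed_vector"
  shows "(norm (a + b + c))\<^sup>2 \<le> 3 * ((norm a)\<^sup>2 + (norm b)\<^sup>2 + (norm c)\<^sup>2)"
proof -
  have "norm (a + b + c) \<le> norm a + norm b + norm c"
    by (metis add_right_mono norm_triangle_ineq order_trans)
  then have "(norm (a + b + c))\<^sup>2 \<le> (norm a + norm b + norm c)\<^sup>2"
    by (simp add: power_mono)
  moreover have "0 \<le> (norm a - norm b)\<^sup>2 + (norm b - norm c)\<^sup>2 + (norm a - norm c)\<^sup>2"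
    by simp
  ultimately show ?thesis by (simp add: power2_eq_square algebra_simps)
qed

lemma norm_add_power2_le_weighted:
  fixes a b :: "'a::real_inner"
  assumes "e > 0"
  shows "(norm (a + b))\<^sup>2 \<le> (1 + e) * (norm a)\<^sup>2 + (1 + 1 / e) * (norm b)\<^sup>2"
proof -
  have "0 \<le> (norm (sqrt e *\<^sub>R a - (1 / sqrt e) *\<^sub>R b))\<^sup>2" by simp
  also have "\<dots> = e * (norm a)\<^sup>2 - 2 * (a \<bullet> b) + (1 / e) * (norm b)\<^sup>2"
    using assms by (simp add: power2_norm_eq_inner inner_diff_left inner_diff_right algebra_simps
        real_sqrt_mult[symmetric] inner_commute)
  moreover have "(norm (a + b))\<^sup>2 = (norm a)\<^sup>2 + 2 * (a \<bullet> b) + (norm b)\<^sup>2"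
    by (simp add: power2_norm_eq_inner inner_add_left inner_add_right inner_commute)
  ultimately show ?thesis by (simp add: algebra_simps)
qed

lemma abs_sum_of_same_sign:
  fixes f :: "'r \<Rightarrow> real"
  assumes "(\<forall>r\<in>R. f r \<ge> 0) \<or> (\<forall>r\<in>R. f r \<le> 0)"
  shows "\<bar>sum f R\<bar> = (\<Sum>r\<in>R. \<bar>f r\<bar>)"
  using assms
proof
  assume "\<forall>r\<in>R. f r \<le> 0"
  then have "\<bar>sum f R\<bar> = (\<Sum>r\<in>R. - f r)" and "\<And>r. r \<in> R \<Longrightarrow> - f r = \<bar>f r\<bar>"
    by (auto simp: sum_nonpos sum_negf)
  then show ?thesis by (metis sum.cong)
qed (simp add: sum_nonneg)

lemma closest_point_ascent_step:
  fixes w g :: "'a::{real_inner,heine_borel}"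
  assumes "convex S" "closed S" "w \<in> S" "\<rho> > 0"
  defines "p \<equiv> closest_point S (w + (1 / \<rho>) *\<^sub>R g)"
  shows "\<rho> * (norm (p - w))\<^sup>2 \<le> g \<bullet> (p - w)"
proof -
  have "(w + (1 / \<rho>) *\<^sub>R g - p) \<bullet> (w - p) \<le> 0"
    unfolding p_def by (rule closest_point_dot) (use assms in auto)
  then have "(norm (p - w))\<^sup>2 \<le> (1 / \<rho>) * (g \<bullet> (p - w))"
    by (simp add: power2_norm_eq_inner inner_diff_left inner_diff_right inner_add_left algebra_simps)
  then show ?thesis
    using assms(4) by (simp add: field_simps)
qed

section \<open>Block structure of H_i and A_i\<close>

lemma finite_nbrs: "E \<subseteq> {1..N} \<times> {1..N} \<Longrightarrow> finite (nbrs E i)"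
  unfolding nbrs_def by (rule finite_subset[of _ "{1..N}"]) auto

lemma finite_zblks: "finite (nbrs E i) \<Longrightarrow> finite (zblks E i)"
  unfolding zblks_def by auto

lemma finite_hblks: "finite (nbrs E i) \<Longrightarrow> finite (hblks E i)"
  unfolding hblks_def by auto

lemma finite_ablks: "finite (nbrs E i) \<Longrightarrow> finite (ablks E i)"
  unfolding ablks_def by auto

lemma card_hblks: "finite (nbrs E i) \<Longrightarrow> card (hblks E i) = card (nbrs E i) + 1"
  unfolding hblks_def by (subst card_Un_disjoint) (auto simp: card_image inj_on_def)

lemma sum_zblks:
  assumes "finite (nbrs E i)"
  shows "(\<Sum>b\<in>zblks E i. f b) = f BX + f BY
    + (\<Sum>j\<in>nbrs E i. f (BPm j)) + (\<Sum>j\<in>nbrs E i. f (BPp j))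
    + (\<Sum>j\<in>nbrs E i. f (BQm j)) + (\<Sum>j\<in>nbrs E i. f (BQp j))"
proof -
  let ?J = "nbrs E i"
  let ?P = "((BPm ` ?J \<union> BPp ` ?J) \<union> BQm ` ?J) \<union> BQp ` ?J"
  have zblks_eq: "zblks E i = insert BX (insert BY ?P)"
    unfolding zblks_def by auto
  have "(\<Sum>b\<in>zblks E i. f b) = f BX + (f BY + sum f ?P)"
    unfolding zblks_eq using assms by (subst sum.insert, auto)+
  also have "sum f ?P = sum f (BPm ` ?J) + sum f (BPp ` ?J) + sum f (BQm ` ?J) + sum f (BQp ` ?J)"
    using assms by (subst sum.union_disjoint, auto)+
  finally show ?thesis by (simp add: sum.reindex inj_on_def add.assoc)
qed

lemma sum_hblks:
  assumes "finite (nbrs E i)"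
  shows "(\<Sum>r\<in>hblks E i. f r) = (\<Sum>j\<in>nbrs E i. f (HP j)) + f HR"
  unfolding hblks_def using assms
  by (subst sum.union_disjoint; (auto simp: sum.reindex inj_on_def)?)+

lemma sum_ablks:
  assumes "finite (nbrs E i)"
  shows "(\<Sum>r\<in>ablks E i. f r) =
    (\<Sum>j\<in>nbrs E i. f (A1 j)) + (\<Sum>j\<in>nbrs E i. f (A2 j)) + (\<Sum>j\<in>nbrs E i. f (A3 j))"
  unfolding ablks_def using assms
  by (subst sum.union_disjoint; (auto simp: sum.reindex inj_on_def)?)+

text \<open>The sparsity pattern of H_i and A_i with sign s on the second nonzero entry of each row:
  s = -1 gives H_i and A_i, s = 1 gives the entrywise absolute values.\<close>

fun Hsgn :: "real \<Rightarrow> hblk \<Rightarrow> blk \<Rightarrow> real" where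
  "Hsgn s (HP j) b = (if b = BX then 1 else if b = BPp j then s else 0)"
| "Hsgn s HR b = (if b = BX then 1 else if b = BY then s else 0)"

fun Asgn :: "real \<Rightarrow> ablk \<Rightarrow> blk \<Rightarrow> real" where
  "Asgn s (A1 j) b = (if b = BX then 1 else if b = BPm j then s else 0)"
| "Asgn s (A2 j) b = (if b = BY then 1 else if b = BQm j then s else 0)"
| "Asgn s (A3 j) b = (if b = BY then 1 else if b = BQp j then s else 0)"

lemma Hc_eq_Hsgn: "Hc r b = Hsgn (-1) r b"
  by (cases r) auto

lemma Ac_eq_Asgn: "Ac r b = Asgn (-1) r b"
  by (cases r) auto

lemma abs_Hc: "\<bar>Hc r b\<bar> = Hsgn 1 r b"
  by (cases r) auto

lemma abs_Ac: "\<bar>Ac r b\<bar> = Asgn 1 r b"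
  by (cases r) auto

lemma Hc_mult_offdiag_nonpos: "b \<noteq> b' \<Longrightarrow> Hc r b * Hc r b' \<le> 0"
  by (cases r) auto

lemma Ac_mult_offdiag_nonpos: "b \<noteq> b' \<Longrightarrow> Ac r b * Ac r b' \<le> 0"
  by (cases r) auto

lemma zblk_coefficient_nonzero:
  assumes "b \<in> zblks E i"
  shows "(\<exists>r\<in>hblks E i. Hc r b \<noteq> 0) \<or> (\<exists>r\<in>ablks E i. Ac r b \<noteq> 0)"
proof -
  have "b \<in> {BX, BY} \<or> (\<exists>j\<in>nbrs E i. b = BPp j) \<or> (\<exists>j\<in>nbrs E i. b \<in> {BPm j, BQm j, BQp j})"
    using assms unfolding zblks_def by auto
  then show ?thesis
  proof (elim disjE bexE)
    assume "b \<in> {BX, BY}"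
    then show ?thesis by (intro disjI1 bexI[of _ HR]) (auto simp: hblks_def)
  next
    fix j assume "j \<in> nbrs E i" "b = BPp j"
    then show ?thesis by (intro disjI1 bexI[of _ "HP j"]) (auto simp: hblks_def)
  next
    fix j assume j: "j \<in> nbrs E i" and "b \<in> {BPm j, BQm j, BQp j}"
    then have "Ac (A1 j) b \<noteq> 0 \<or> Ac (A2 j) b \<noteq> 0 \<or> Ac (A3 j) b \<noteq> 0"
      by auto
    moreover have "A1 j \<in> ablks E i" "A2 j \<in> ablks E i" "A3 j \<in> ablks E i"
      using j by (auto simp: ablks_def)
    ultimately show ?thesis by blast
  qed
qed

definition tmul :: "('r \<Rightarrow> blk \<Rightarrow> real) \<Rightarrow> 'r set \<Rightarrow> ('r \<Rightarrow> 'v::real_vector) \<Rightarrow> blk \<Rightarrow> 'v" where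
  "tmul K R u = (\<lambda>b. \<Sum>r\<in>R. K r b *\<^sub>R u r)"

lemma HTmul_eq_tmul: "HTmul E i u = tmul (Hsgn (-1)) (hblks E i) u"
  unfolding HTmul_def tmul_def by (simp add: Hc_eq_Hsgn)

lemma ATmul_eq_tmul: "ATmul E i u = tmul (Asgn (-1)) (ablks E i) u"
  unfolding ATmul_def tmul_def by (simp add: Ac_eq_Asgn)

lemma tmul_Hsgn:
  assumes "finite (nbrs E i)"
  shows "tmul (Hsgn s) (hblks E i) u BX = (\<Sum>j\<in>nbrs E i. u (HP j)) + u HR"
    "tmul (Hsgn s) (hblks E i) u BY = s *\<^sub>R u HR"
    "j \<in> nbrs E i \<Longrightarrow> tmul (Hsgn s) (hblks E i) u (BPp j) = s *\<^sub>R u (HP j)"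
    "tmul (Hsgn s) (hblks E i) u (BPm j) = 0"
    "tmul (Hsgn s) (hblks E i) u (BQm j) = 0"
    "tmul (Hsgn s) (hblks E i) u (BQp j) = 0"
  unfolding tmul_def using assms by (simp_all add: sum_hblks if_smult cong: if_cong)

lemma tmul_Asgn:
  assumes "finite (nbrs E i)"
  shows "tmul (Asgn s) (ablks E i) u BX = (\<Sum>j\<in>nbrs E i. u (A1 j))"
    "tmul (Asgn s) (ablks E i) u BY = (\<Sum>j\<in>nbrs E i. u (A2 j)) + (\<Sum>j\<in>nbrs E i. u (A3 j))"
    "j \<in> nbrs E i \<Longrightarrow> tmul (Asgn s) (ablks E i) u (BPm j) = s *\<^sub>R u (A1 j)"
    "j \<in> nbrs E i \<Longrightarrow> tmul (Asgn s) (ablks E i) u (BQm j) = s *\<^sub>R u (A2 j)"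
    "j \<in> nbrs E i \<Longrightarrow> tmul (Asgn s) (ablks E i) u (BQp j) = s *\<^sub>R u (A3 j)"
    "tmul (Asgn s) (ablks E i) u (BPp j) = 0"
  unfolding tmul_def using assms by (simp_all add: sum_ablks if_smult cong: if_cong)

lemma tmul_Hsgn_norm_le:
  fixes u :: "hblk \<Rightarrow> 'v::real_normed_vector"
  assumes fin: "finite (nbrs E i)" and s: "\<bar>s\<bar> = 1"
  shows "(\<Sum>b\<in>zblks E i. (norm (tmul (Hsgn s) (hblks E i) u b))\<^sup>2)
     \<le> (real (card (nbrs E i)) + 2) * (\<Sum>r\<in>hblks E i. (norm (u r))\<^sup>2)"
proof -
  have "tmul (Hsgn s) (hblks E i) u BX = (\<Sum>r\<in>hblks E i. u r)"
    using fin by (simp add: tmul_Hsgn sum_hblks)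
  then have "(\<Sum>b\<in>zblks E i. (norm (tmul (Hsgn s) (hblks E i) u b))\<^sup>2)
     = (norm (\<Sum>r\<in>hblks E i. u r))\<^sup>2 + (\<Sum>r\<in>hblks E i. (norm (u r))\<^sup>2)"
    using fin s by (simp add: sum_zblks sum_hblks tmul_Hsgn)
  also have "\<dots> \<le> (real (card (nbrs E i)) + 2) * (\<Sum>r\<in>hblks E i. (norm (u r))\<^sup>2)"
    using norm_sum_power2_le[of u "hblks E i"] fin by (simp add: card_hblks algebra_simps)
  finally show ?thesis .
qed

lemma tmul_Asgn_norm_eq:
  fixes u :: "ablk \<Rightarrow> 'v::real_normed_vector"
  assumes "finite (nbrs E i)" and "\<bar>s\<bar> = 1"
  shows "(\<Sum>b\<in>zblks E i. (norm (tmul (Asgn s) (ablks E i) u b))\<^sup>2)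
     = (norm (\<Sum>j\<in>nbrs E i. u (A1 j)))\<^sup>2 + (norm (\<Sum>j\<in>nbrs E i. u (A2 j) + u (A3 j)))\<^sup>2
       + (\<Sum>r\<in>ablks E i. (norm (u r))\<^sup>2)"
  using assms by (simp add: sum_zblks sum_ablks tmul_Asgn sum.distrib)

lemma tmul_Asgn_norm_ge:
  fixes u :: "ablk \<Rightarrow> 'v::real_normed_vector"
  assumes "finite (nbrs E i)" and "\<bar>s\<bar> = 1"
  shows "(\<Sum>r\<in>ablks E i. (norm (u r))\<^sup>2) \<le> (\<Sum>b\<in>zblks E i. (norm (tmul (Asgn s) (ablks E i) u b))\<^sup>2)"
  unfolding tmul_Asgn_norm_eq[OF assms] by simp

lemma tmul_Asgn_norm_le:
  fixes u :: "ablk \<Rightarrow> 'v::real_inner"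
  assumes fin: "finite (nbrs E i)" and s: "\<bar>s\<bar> = 1"
  shows "(\<Sum>b\<in>zblks E i. (norm (tmul (Asgn s) (ablks E i) u b))\<^sup>2)
     \<le> (2 * real (card (nbrs E i)) + 1) * (\<Sum>r\<in>ablks E i. (norm (u r))\<^sup>2)"
proof -
  let ?J = "nbrs E i" and ?N = "real (card (nbrs E i))"
  have "(norm (\<Sum>j\<in>?J. u (A2 j) + u (A3 j)))\<^sup>2 \<le> ?N * (\<Sum>j\<in>?J. (norm (u (A2 j) + u (A3 j)))\<^sup>2)"
    by (rule norm_sum_power2_le)
  also have "\<dots> \<le> ?N * (\<Sum>j\<in>?J. 2 * (norm (u (A2 j)))\<^sup>2 + 2 * (norm (u (A3 j)))\<^sup>2)"
    using norm_add_power2_le_weighted[of 1] by (intro mult_left_mono sum_mono) simp_all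
  finally have "(norm (\<Sum>j\<in>?J. u (A2 j) + u (A3 j)))\<^sup>2
      \<le> 2 * ?N * ((\<Sum>j\<in>?J. (norm (u (A2 j)))\<^sup>2) + (\<Sum>j\<in>?J. (norm (u (A3 j)))\<^sup>2))"
    by (simp add: sum.distrib sum_distrib_left[symmetric] algebra_simps)
  moreover have "(norm (\<Sum>j\<in>?J. u (A1 j)))\<^sup>2 \<le> ?N * (\<Sum>j\<in>?J. (norm (u (A1 j)))\<^sup>2)"
    by (rule norm_sum_power2_le)
  moreover have "0 \<le> ?N * (\<Sum>j\<in>?J. (norm (u (A1 j)))\<^sup>2)"
    by (simp add: sum_nonneg)
  ultimately show ?thesis
    unfolding tmul_Asgn_norm_eq[OF assms] using fin by (simp add: sum_ablks algebra_simps)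
qed

section \<open>Gram matrices and the proximal weight S_i\<close>

lemma sum_gram_scaleR:
  fixes v :: "blk \<Rightarrow> 'v::real_vector"
  shows "(\<Sum>b'\<in>Z. (\<Sum>r\<in>R. K r b * K r b') *\<^sub>R v b') = tmul K R (\<lambda>r. \<Sum>b'\<in>Z. K r b' *\<^sub>R v b') b"
  unfolding tmul_def scaleR_sum_left scaleR_sum_right
  by (subst sum.swap) (simp add: mult.commute)

lemma sum_gram_inner:
  fixes v :: "blk \<Rightarrow> 'v::real_inner"
  shows "(\<Sum>b\<in>Z. \<Sum>b'\<in>Z. (\<Sum>r\<in>R. K r b * K r b') * (v b \<bullet> v b'))
    = (\<Sum>r\<in>R. (norm (\<Sum>b\<in>Z. K r b *\<^sub>R v b))\<^sup>2)"
proof -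
  have "(\<Sum>b\<in>Z. \<Sum>b'\<in>Z. (\<Sum>r\<in>R. K r b * K r b') * (v b \<bullet> v b'))
      = (\<Sum>b\<in>Z. \<Sum>r\<in>R. \<Sum>b'\<in>Z. K r b * K r b' * (v b \<bullet> v b'))"
    by (simp add: sum_distrib_right sum.swap[of _ Z R])
  also have "\<dots> = (\<Sum>r\<in>R. \<Sum>b\<in>Z. \<Sum>b'\<in>Z. K r b * K r b' * (v b \<bullet> v b'))"
    by (rule sum.swap)
  also have "\<dots> = (\<Sum>r\<in>R. (norm (\<Sum>b\<in>Z. K r b *\<^sub>R v b))\<^sup>2)"
    unfolding power2_norm_eq_inner inner_sum_left inner_sum_right
    by (subst (2) sum.swap) (simp add: sum_distrib_left mult.assoc mult.left_commute)
  finally show ?thesis .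
qed

lemma abs_AtA: "\<bar>AtA E i b b'\<bar> = (\<Sum>r\<in>ablks E i. Asgn 1 r b * Asgn 1 r b')"
proof -
  have "(\<forall>r\<in>ablks E i. Ac r b * Ac r b' \<ge> 0) \<or> (\<forall>r\<in>ablks E i. Ac r b * Ac r b' \<le> 0)"
    by (cases "b = b'") (auto simp: Ac_mult_offdiag_nonpos)
  from abs_sum_of_same_sign[OF this] show ?thesis
    unfolding AtA_def by (simp add: abs_Ac[symmetric] abs_mult)
qed

lemma abs_HtH: "\<bar>HtH E i b b'\<bar> = (\<Sum>r\<in>hblks E i. Hsgn 1 r b * Hsgn 1 r b')"
proof -
  have "(\<forall>r\<in>hblks E i. Hc r b * Hc r b' \<ge> 0) \<or> (\<forall>r\<in>hblks E i. Hc r b * Hc r b' \<le> 0)"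
    by (cases "b = b'") (auto simp: Hc_mult_offdiag_nonpos)
  from abs_sum_of_same_sign[OF this] show ?thesis
    unfolding HtH_def by (simp add: abs_Hc[symmetric] abs_mult)
qed

lemma Umat_offdiag:
  assumes "c > 0" "b \<noteq> b'"
  shows "Umat c E i b b' = 0"
proof -
  have "HtH E i b b' \<le> 0" "AtA E i b b' \<le> 0"
    using assms(2) unfolding HtH_def AtA_def
    by (auto intro!: sum_nonpos simp: Hc_mult_offdiag_nonpos Ac_mult_offdiag_nonpos)
  then show ?thesis
    using assms(1) unfolding Umat_def Smat_def by (simp add: algebra_simps)
qed

lemma Umat_diag_pos:
  assumes fin: "finite (nbrs E i)" and c: "c > 0" and b: "b \<in> zblks E i"
  shows "Umat c E i b b > 0"
proof -
  have "HtH E i b b > 0 \<or> AtA E i b b > 0"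
    using zblk_coefficient_nonzero[OF b]
  proof (elim disjE bexE)
    fix r assume "r \<in> hblks E i" "Hc r b \<noteq> 0"
    then show ?thesis
      unfolding HtH_def using fin by (auto intro!: sum_pos2 simp: finite_hblks zero_less_mult_iff)
  next
    fix r assume "r \<in> ablks E i" "Ac r b \<noteq> 0"
    then show ?thesis
      unfolding AtA_def using fin by (auto intro!: sum_pos2 simp: finite_ablks zero_less_mult_iff)
  qed
  moreover have "HtH E i b b \<ge> 0" "AtA E i b b \<ge> 0"
    unfolding HtH_def AtA_def by (simp_all add: sum_nonneg)
  ultimately show ?thesis
    using c unfolding Umat_def Smat_def by (auto simp: add_pos_nonneg add_nonneg_pos)
qed

definition Habs_mul :: "(nat \<times> nat) set \<Rightarrow> nat \<Rightarrow> (blk \<Rightarrow> 'v::real_vector) \<Rightarrow> hblk \<Rightarrow> 'v" where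
  "Habs_mul E i v = (\<lambda>r. \<Sum>b\<in>zblks E i. Hsgn 1 r b *\<^sub>R v b)"

definition Aabs_mul :: "(nat \<times> nat) set \<Rightarrow> nat \<Rightarrow> (blk \<Rightarrow> 'v::real_vector) \<Rightarrow> ablk \<Rightarrow> 'v" where
  "Aabs_mul E i v = (\<lambda>r. \<Sum>b\<in>zblks E i. Asgn 1 r b *\<^sub>R v b)"

lemma mmul_AtA: "mmul E i (AtA E i) v b = ATmul E i (Amul E i v) b"
  unfolding mmul_def AtA_def ATmul_def Amul_def sum_gram_scaleR tmul_def ..

lemma mmul_HtH: "mmul E i (HtH E i) v b = HTmul E i (Hmul E i v) b"
  unfolding mmul_def HtH_def HTmul_def Hmul_def sum_gram_scaleR tmul_def ..

lemma Smat_eq_Gram: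
  "Smat c E i b b' = (\<Sum>r\<in>ablks E i. Asgn 1 r b * Asgn 1 r b')
     + (1 / c) * (\<Sum>r\<in>hblks E i. Hsgn 1 r b * Hsgn 1 r b')"
  unfolding Smat_def abs_AtA abs_HtH ..

lemma mmul_Smat:
  "mmul E i (Smat c E i) v b = tmul (Asgn 1) (ablks E i) (Aabs_mul E i v) b
     + (1 / c) *\<^sub>R tmul (Hsgn 1) (hblks E i) (Habs_mul E i v) b"
proof -
  have "mmul E i (Smat c E i) v b = (\<Sum>b'\<in>zblks E i. (\<Sum>r\<in>ablks E i. Asgn 1 r b * Asgn 1 r b') *\<^sub>R v b')
      + (1 / c) *\<^sub>R (\<Sum>b'\<in>zblks E i. (\<Sum>r\<in>hblks E i. Hsgn 1 r b * Hsgn 1 r b') *\<^sub>R v b')"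
    unfolding mmul_def Smat_eq_Gram by (simp add: scaleR_add_left sum.distrib scaleR_sum_right)
  then show ?thesis
    unfolding sum_gram_scaleR Aabs_mul_def Habs_mul_def .
qed

lemma qform_AtA: "qform E i (AtA E i) v = anorm2 E i (Amul E i v)"
  unfolding qform_def AtA_def anorm2_def Amul_def sum_gram_inner ..

lemma qform_Smat:
  "qform E i (Smat c E i) v = anorm2 E i (Aabs_mul E i v) + (1 / c) * hnorm2 E i (Habs_mul E i v)"
proof -
  have "qform E i (Smat c E i) v =
     (\<Sum>b\<in>zblks E i. \<Sum>b'\<in>zblks E i. (\<Sum>r\<in>ablks E i. Asgn 1 r b * Asgn 1 r b') * (v b \<bullet> v b'))
     + (1 / c) * (\<Sum>b\<in>zblks E i. \<Sum>b'\<in>zblks E i. (\<Sum>r\<in>hblks E i. Hsgn 1 r b * Hsgn 1 r b') * (v b \<bullet> v b'))"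
    unfolding qform_def Smat_eq_Gram by (simp add: algebra_simps sum.distrib sum_distrib_left)
  then show ?thesis
    unfolding sum_gram_inner anorm2_def hnorm2_def Aabs_mul_def Habs_mul_def .
qed

lemma qform_Smat_nonneg: "c > 0 \<Longrightarrow> qform E i (Smat c E i) v \<ge> 0"
  by (simp add: qform_Smat anorm2_def hnorm2_def sum_nonneg)

lemma mmul_Umat_diag:
  assumes fin: "finite (nbrs E i)" and c: "c > 0" and b: "b \<in> zblks E i"
  shows "mmul E i (Umat c E i) v b = Umat c E i b b *\<^sub>R v b"
proof -
  have "mmul E i (Umat c E i) v b = (\<Sum>b'\<in>zblks E i. if b' = b then Umat c E i b b *\<^sub>R v b else 0)"
    unfolding mmul_def by (rule sum.cong) (auto simp: Umat_offdiag[OF c])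
  also have "\<dots> = Umat c E i b b *\<^sub>R v b"
    using b fin by (simp add: finite_zblks)
  finally show ?thesis .
qed

lemma mmul_Umat:
  "mmul E i (Umat c E i) v b = HTmul E i (Hmul E i v) b + c *\<^sub>R ATmul E i (Amul E i v) b
     + c *\<^sub>R mmul E i (Smat c E i) v b"
  unfolding mmul_HtH[symmetric] mmul_AtA[symmetric]
  unfolding mmul_def Umat_def by (simp add: scaleR_add_left sum.distrib scaleR_sum_right)

lemma HTmul_diff: "HTmul E i (u - u') b = HTmul E i u b - HTmul E i u' b"
  unfolding HTmul_def by (simp add: scaleR_diff_right sum_subtractf)

lemma ATmul_diff: "ATmul E i (u - u') b = ATmul E i u b - ATmul E i u' b"
  unfolding ATmul_def by (simp add: scaleR_diff_right sum_subtractf)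

lemma ATmul_scaleR: "ATmul E i (\<lambda>k. c *\<^sub>R u k) b = c *\<^sub>R ATmul E i u b"
  unfolding ATmul_def by (simp add: scaleR_sum_right mult.commute)

lemma mmul_diff: "mmul E i M (u - u') b = mmul E i M u b - mmul E i M u' b"
  unfolding mmul_def by (simp add: scaleR_diff_right sum_subtractf)

lemma Amul_diff: "Amul E i (u - u') = Amul E i u - Amul E i u'"
  unfolding Amul_def by (simp add: fun_eq_iff scaleR_diff_right sum_subtractf)

lemma Dmul_diff: "Dmul d rr i (u - u') = Dmul d rr i u - Dmul d rr i u'"
  unfolding Dmul_def by (simp add: fun_eq_iff scaleR_diff_right)

lemma norm_mmul_Smat_le:
  fixes v :: "blk \<Rightarrow> real^'n"
  assumes fin: "finite (nbrs E i)" and c: "c > 0"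
  shows "c * (\<Sum>b\<in>zblks E i. (norm (mmul E i (Smat c E i) v b))\<^sup>2)
    \<le> (1 + 2 * c) * (real (card (nbrs E i)) + 2) * qform E i (Smat c E i) v"
proof -
  let ?N = "real (card (nbrs E i))"
  let ?x = "tmul (Asgn 1) (ablks E i) (Aabs_mul E i v)" and ?y = "tmul (Hsgn 1) (hblks E i) (Habs_mul E i v)"
  let ?a = "anorm2 E i (Aabs_mul E i v)" and ?h = "hnorm2 E i (Habs_mul E i v)"
  have young: "(norm (x + y))\<^sup>2 \<le> (1 + 1 / (2 * c)) * (norm x)\<^sup>2 + (1 + 2 * c) * (norm y)\<^sup>2"
    for x y :: "real^'n"
    using norm_add_power2_le_weighted[of "1 / (2 * c)" x y] c by simp
  have "(\<Sum>b\<in>zblks E i. (norm (mmul E i (Smat c E i) v b))\<^sup>2)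
      \<le> (\<Sum>b\<in>zblks E i. (1 + 1 / (2 * c)) * (norm (?x b))\<^sup>2 + (1 + 2 * c) * (norm ((1 / c) *\<^sub>R ?y b))\<^sup>2)"
    unfolding mmul_Smat by (intro sum_mono young)
  also have "\<dots> = (1 + 1 / (2 * c)) * (\<Sum>b\<in>zblks E i. (norm (?x b))\<^sup>2)
      + ((1 + 2 * c) / c\<^sup>2) * (\<Sum>b\<in>zblks E i. (norm (?y b))\<^sup>2)"
    using c by (simp add: sum.distrib sum_distrib_left power_divide power2_eq_square)
  also have "\<dots> \<le> (1 + 1 / (2 * c)) * ((2 * ?N + 1) * ?a) + ((1 + 2 * c) / c\<^sup>2) * ((?N + 2) * ?h)"
    using tmul_Asgn_norm_le[OF fin, of 1 "Aabs_mul E i v"] tmul_Hsgn_norm_le[OF fin, of 1 "Habs_mul E i v"] c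
    by (intro add_mono mult_left_mono) (auto simp: anorm2_def hnorm2_def)
  finally have "c * (\<Sum>b\<in>zblks E i. (norm (mmul E i (Smat c E i) v b))\<^sup>2)
      \<le> c * ((1 + 1 / (2 * c)) * ((2 * ?N + 1) * ?a) + ((1 + 2 * c) / c\<^sup>2) * ((?N + 2) * ?h))"
    using c by simp
  also have "\<dots> = (c + 1 / 2) * (2 * ?N + 1) * ?a + (1 + 2 * c) * (?N + 2) * (?h / c)"
    using c by (simp add: field_simps power2_eq_square)
  also have "\<dots> \<le> (1 + 2 * c) * (?N + 2) * ?a + (1 + 2 * c) * (?N + 2) * (?h / c)"
    using c by (intro add_mono mult_right_mono) (auto simp: anorm2_def hnorm2_def sum_nonneg algebra_simps)
  also have "\<dots> = (1 + 2 * c) * (?N + 2) * qform E i (Smat c E i) v"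
    by (simp add: qform_Smat algebra_simps)
  finally show ?thesis .
qed

section \<open>One iteration of SP-ADMM-JCNL\<close>

lemma Umat_scaleR_ztil:
  assumes "finite (nbrs E i)" "c > 0" "b \<in> zblks E i"
  shows "Umat c E i b b *\<^sub>R ztil c E d rr i zi wi li b =
     HTmul E i (Dmul d rr i wi) b - ATmul E i li b + c *\<^sub>R mmul E i (Smat c E i) zi b"
  using Umat_diag_pos[OF assms] unfolding ztil_def by simp

text \<open>Since U_i is diagonal, the definition of the auxiliary point reads
  U_i ztil_i = H_i^T D_i w_i - A_i^T lambda_i + c S_i z_i. Subtracting two consecutive instances
  and using lambda^t - lambda^{t-1} = c A_i z^t expresses c A_i^T A_i z^{t+1} through three residuals.\<close>

lemma ATmul_Amul_decomposition:
  fixes z1 z0 zm :: "blk \<Rightarrow> real^'n" and w0 wm :: "hblk \<Rightarrow> real^'n" and l0 lm :: "ablk \<Rightarrow> real^'n"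
    and d :: "nat \<Rightarrow> nat \<Rightarrow> real" and rr :: "nat \<Rightarrow> real"
  assumes fin: "finite (nbrs E i)" and c: "c > 0" and b: "b \<in> zblks E i"
    and l0: "\<forall>k\<in>ablks E i. l0 k = lm k + c *\<^sub>R Amul E i z0 k"
  defines "dzt \<equiv> ztil c E d rr i z0 w0 l0 - ztil c E d rr i zm wm lm"
  shows "c *\<^sub>R ATmul E i (Amul E i z1) b =
     - HTmul E i (Hmul E i dzt - Dmul d rr i (w0 - wm)) b
     - c *\<^sub>R ATmul E i (Amul E i (dzt - (z1 - z0))) b
     - c *\<^sub>R mmul E i (Smat c E i) (dzt - (z0 - zm)) b"
proof -
  have "ATmul E i (l0 - lm) b = ATmul E i (\<lambda>k. c *\<^sub>R Amul E i z0 k) b"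
    unfolding ATmul_def using l0 by (intro sum.cong) auto
  then have dual: "ATmul E i (l0 - lm) b = c *\<^sub>R ATmul E i (Amul E i z0) b"
    by (simp add: ATmul_scaleR)
  have "mmul E i (Umat c E i) dzt b = Umat c E i b b *\<^sub>R dzt b"
    by (rule mmul_Umat_diag[OF fin c b])
  also have "\<dots> = Umat c E i b b *\<^sub>R ztil c E d rr i z0 w0 l0 b - Umat c E i b b *\<^sub>R ztil c E d rr i zm wm lm b"
    unfolding dzt_def by (simp add: scaleR_diff_right)
  also have "\<dots> = HTmul E i (Dmul d rr i (w0 - wm)) b - ATmul E i (l0 - lm) b
      + c *\<^sub>R mmul E i (Smat c E i) (z0 - zm) b"
    unfolding Umat_scaleR_ztil[OF fin c b] Dmul_diff HTmul_diff ATmul_diff mmul_diff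
    by (simp add: algebra_simps)
  finally have "HTmul E i (Hmul E i dzt) b + c *\<^sub>R ATmul E i (Amul E i dzt) b
        + c *\<^sub>R mmul E i (Smat c E i) dzt b
      = HTmul E i (Dmul d rr i (w0 - wm)) b - c *\<^sub>R ATmul E i (Amul E i z0) b
        + c *\<^sub>R mmul E i (Smat c E i) (z0 - zm) b"
    unfolding mmul_Umat dual .
  then have "HTmul E i (Hmul E i dzt) b
      = HTmul E i (Dmul d rr i (w0 - wm)) b - c *\<^sub>R ATmul E i (Amul E i z0) b
        + c *\<^sub>R mmul E i (Smat c E i) (z0 - zm) b
        - (c *\<^sub>R ATmul E i (Amul E i dzt) b + c *\<^sub>R mmul E i (Smat c E i) dzt b)"
    by (simp add: eq_diff_eq add.assoc)
  then show ?thesis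
    unfolding HTmul_diff ATmul_diff Amul_diff by (simp add: algebra_simps mmul_diff)
qed

text \<open>The norm of A_i^T dominates that of its argument, so c ||A_i z||^2 is controlled by the
  decomposition of c A_i^T A_i z above.\<close>

lemma dual_residual_bound:
  fixes z1 z0 zm :: "blk \<Rightarrow> real^'n" and w0 wm :: "hblk \<Rightarrow> real^'n" and l0 lm :: "ablk \<Rightarrow> real^'n"
    and d :: "nat \<Rightarrow> nat \<Rightarrow> real" and rr :: "nat \<Rightarrow> real"
  assumes fin: "finite (nbrs E i)" and c: "c > 0"
    and l0: "\<forall>k\<in>ablks E i. l0 k = lm k + c *\<^sub>R Amul E i z0 k"
  defines "dzt \<equiv> ztil c E d rr i z0 w0 l0 - ztil c E d rr i zm wm lm"
  shows "c * anorm2 E i (Amul E i z1) \<le>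
     3 * (real (card (nbrs E i)) + 2) / c * hnorm2 E i (Hmul E i dzt - Dmul d rr i (w0 - wm))
     + 3 * c * (2 * real (card (nbrs E i)) + 1) * qform E i (AtA E i) (dzt - (z1 - z0))
     + 3 * (1 + 2 * c) * (2 + real (card (nbrs E i))) * qform E i (Smat c E i) (dzt - (z0 - zm))"
proof -
  let ?N = "real (card (nbrs E i))" and ?Z = "zblks E i"
  let ?u = "Hmul E i dzt - Dmul d rr i (w0 - wm)"
  let ?v = "dzt - (z1 - z0)" and ?v' = "dzt - (z0 - zm)"
  let ?T1 = "\<lambda>b. - HTmul E i ?u b" and ?T2 = "\<lambda>b. - (c *\<^sub>R ATmul E i (Amul E i ?v) b)"
    and ?T3 = "\<lambda>b. - (c *\<^sub>R mmul E i (Smat c E i) ?v' b)"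
  have decomp: "tmul (Asgn (-1)) (ablks E i) (\<lambda>k. c *\<^sub>R Amul E i z1 k) b = ?T1 b + ?T2 b + ?T3 b"
    if "b \<in> ?Z" for b
    using ATmul_Amul_decomposition[OF fin c that l0, where ?z1.0=z1 and ?w0.0=w0 and wm=wm and zm=zm]
    unfolding dzt_def ATmul_eq_tmul[symmetric] ATmul_scaleR by simp
  have "c * anorm2 E i (Amul E i z1) = (1 / c) * (\<Sum>k\<in>ablks E i. (norm (c *\<^sub>R Amul E i z1 k))\<^sup>2)"
    using c by (simp add: anorm2_def sum_distrib_left power2_eq_square mult_ac)
  also have "\<dots> \<le> (1 / c) * (\<Sum>b\<in>?Z. (norm (tmul (Asgn (-1)) (ablks E i) (\<lambda>k. c *\<^sub>R Amul E i z1 k) b))\<^sup>2)"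
    using c tmul_Asgn_norm_ge[OF fin, of "-1" "\<lambda>k. c *\<^sub>R Amul E i z1 k"] by (intro mult_left_mono) auto
  also have "\<dots> = (1 / c) * (\<Sum>b\<in>?Z. (norm (?T1 b + ?T2 b + ?T3 b))\<^sup>2)"
    using decomp by simp
  also have "\<dots> \<le> (1 / c) * (\<Sum>b\<in>?Z. 3 * ((norm (?T1 b))\<^sup>2 + (norm (?T2 b))\<^sup>2 + (norm (?T3 b))\<^sup>2))"
    using c by (intro mult_left_mono sum_mono norm_add3_power2_le) auto
  also have "\<dots> = (3 / c) * ((\<Sum>b\<in>?Z. (norm (HTmul E i ?u b))\<^sup>2)
      + c\<^sup>2 * (\<Sum>b\<in>?Z. (norm (ATmul E i (Amul E i ?v) b))\<^sup>2)
      + c\<^sup>2 * (\<Sum>b\<in>?Z. (norm (mmul E i (Smat c E i) ?v' b))\<^sup>2))"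
    using c by (simp add: sum.distrib sum_distrib_left power_mult_distrib algebra_simps)
  also have "\<dots> \<le> (3 / c) * ((?N + 2) * hnorm2 E i ?u
      + c\<^sup>2 * ((2 * ?N + 1) * anorm2 E i (Amul E i ?v))
      + c * ((1 + 2 * c) * (?N + 2) * qform E i (Smat c E i) ?v'))"
  proof -
    have "(\<Sum>b\<in>?Z. (norm (HTmul E i ?u b))\<^sup>2) \<le> (?N + 2) * hnorm2 E i ?u"
      using tmul_Hsgn_norm_le[OF fin, of "-1" ?u] unfolding HTmul_eq_tmul hnorm2_def by simp
    moreover have "(\<Sum>b\<in>?Z. (norm (ATmul E i (Amul E i ?v) b))\<^sup>2) \<le> (2 * ?N + 1) * anorm2 E i (Amul E i ?v)"
      using tmul_Asgn_norm_le[OF fin, of "-1" "Amul E i ?v"] unfolding ATmul_eq_tmul anorm2_def by simp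
    moreover have "c\<^sup>2 * (\<Sum>b\<in>?Z. (norm (mmul E i (Smat c E i) ?v' b))\<^sup>2)
        \<le> c * ((1 + 2 * c) * (?N + 2) * qform E i (Smat c E i) ?v')"
      using norm_mmul_Smat_le[OF fin c, of ?v'] c by (simp add: power2_eq_square mult.assoc)
    ultimately show ?thesis
      using c by (intro mult_left_mono add_mono) auto
  qed
  also have "\<dots> = 3 * (?N + 2) / c * hnorm2 E i ?u
     + 3 * c * (2 * ?N + 1) * qform E i (AtA E i) ?v
     + 3 * (1 + 2 * c) * (2 + ?N) * qform E i (Smat c E i) ?v'"
    using c by (simp add: qform_AtA field_simps power2_eq_square)
  finally show ?thesis .
qed

lemma Lsm_w_diff:
  "Lsm c E d rr i z w1 l - Lsm c E d rr i z w0 l = - hinner E i (w1 - w0) (Dmul d rr i (Hmul E i z))"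
  unfolding Lsm_def Gfun_def hinner_def by (simp add: inner_diff_left sum_subtractf)

lemma Lsm_l_diff:
  assumes "\<forall>k\<in>ablks E i. l1 k = l0 k + c *\<^sub>R Amul E i z k"
  shows "Lsm c E d rr i z w l1 - Lsm c E d rr i z w l0 = c * anorm2 E i (Amul E i z)"
proof -
  have "Lsm c E d rr i z w l1 - Lsm c E d rr i z w l0 = (\<Sum>k\<in>ablks E i. (l1 k - l0 k) \<bullet> Amul E i z k)"
    unfolding Lsm_def ainner_def by (simp add: inner_diff_left sum_subtractf)
  also have "\<dots> = (\<Sum>k\<in>ablks E i. c * (norm (Amul E i z k))\<^sup>2)"
    using assms by (intro sum.cong) (auto simp: power2_norm_eq_inner)
  finally show ?thesis by (simp add: anorm2_def sum_distrib_left)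
qed

lemma Lsm_w_step_le:
  assumes \<rho>: "\<rho> > 0" and w0: "in_balls E i w0"
    and w1: "\<forall>k\<in>hblks E i. w1 k = closest_point (cball 0 1) (w0 k + (1 / \<rho>) *\<^sub>R Dmul d rr i (Hmul E i z) k)"
  shows "Lsm c E d rr i z w1 l - Lsm c E d rr i z w0 l \<le> - \<rho> * hnorm2 E i (w1 - w0)"
proof -
  have "\<rho> * hnorm2 E i (w1 - w0) \<le> hinner E i (w1 - w0) (Dmul d rr i (Hmul E i z))"
    unfolding hnorm2_def hinner_def sum_distrib_left
  proof (intro sum_mono)
    fix k assume "k \<in> hblks E i"
    then show "\<rho> * (norm ((w1 - w0) k))\<^sup>2 \<le> (w1 - w0) k \<bullet> Dmul d rr i (Hmul E i z) k"
      using closest_point_ascent_step[of "cball 0 1" "w0 k" \<rho> "Dmul d rr i (Hmul E i z) k"] \<rho> w0 w1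
      by (simp add: in_balls_def inner_commute)
  qed
  then show ?thesis unfolding Lsm_w_diff by simp
qed

lemma Lsm_wl_step_le:
  fixes z1 z0 zm :: "blk \<Rightarrow> real^'n" and w1 w0 wm :: "hblk \<Rightarrow> real^'n"
    and l1 l0 lm :: "ablk \<Rightarrow> real^'n" and d :: "nat \<Rightarrow> nat \<Rightarrow> real" and rr :: "nat \<Rightarrow> real"
  assumes fin: "finite (nbrs E i)" and c: "c > 0" and \<rho>: "\<rho> > 0"
    and Nmax: "real (card (nbrs E i)) \<le> Nmax"
    and w0: "in_balls E i w0"
    and w1: "\<forall>k\<in>hblks E i. w1 k = closest_point (cball 0 1) (w0 k + (1 / \<rho>) *\<^sub>R Dmul d rr i (Hmul E i z1) k)"
    and l1: "\<forall>k\<in>ablks E i. l1 k = l0 k + c *\<^sub>R Amul E i z1 k"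
    and l0: "\<forall>k\<in>ablks E i. l0 k = lm k + c *\<^sub>R Amul E i z0 k"
  defines "dzt \<equiv> ztil c E d rr i z0 w0 l0 - ztil c E d rr i zm wm lm"
  shows "Lsm c E d rr i z1 w1 l1 - Lsm c E d rr i z1 w0 l0 \<le>
     - \<rho> / 2 * hnorm2 E i (w1 - w0)
     + 3 * (Nmax + 2) / c * hnorm2 E i (Hmul E i dzt - Dmul d rr i (w0 - wm))
     + 3 * c * (2 * Nmax + 1) * qform E i (AtA E i) (dzt - (z1 - z0))
     + 3 * (1 + 2 * c) * (2 + Nmax) * qform E i (Smat c E i) (dzt - (z0 - zm))"
proof -
  have "Lsm c E d rr i z1 w1 l0 - Lsm c E d rr i z1 w0 l0 \<le> - \<rho> * hnorm2 E i (w1 - w0)"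
    by (rule Lsm_w_step_le[OF \<rho> w0 w1])
  moreover have "Lsm c E d rr i z1 w1 l1 - Lsm c E d rr i z1 w1 l0 = c * anorm2 E i (Amul E i z1)"
    by (rule Lsm_l_diff[OF l1])
  moreover have "c * anorm2 E i (Amul E i z1) \<le>
     3 * (Nmax + 2) / c * hnorm2 E i (Hmul E i dzt - Dmul d rr i (w0 - wm))
     + 3 * c * (2 * Nmax + 1) * qform E i (AtA E i) (dzt - (z1 - z0))
     + 3 * (1 + 2 * c) * (2 + Nmax) * qform E i (Smat c E i) (dzt - (z0 - zm))"
  proof -
    have "0 \<le> hnorm2 E i u" for u :: "hblk \<Rightarrow> real^'n"
      by (simp add: hnorm2_def sum_nonneg)
    moreover have "0 \<le> qform E i (AtA E i) v" for v :: "blk \<Rightarrow> real^'n"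
      by (simp add: qform_AtA anorm2_def sum_nonneg)
    moreover have "0 \<le> qform E i (Smat c E i) v" for v :: "blk \<Rightarrow> real^'n"
      using c by (rule qform_Smat_nonneg)
    moreover note dual_residual_bound[OF fin c l0, where ?z1.0=z1 and ?w0.0=w0 and wm=wm and zm=zm
        and d=d and rr=rr, folded dzt_def]
    ultimately show ?thesis
      using c Nmax by (elim order_trans) (intro add_mono mult_right_mono divide_right_mono; simp)
  qed
  moreover have "\<rho> / 2 * hnorm2 E i (w1 - w0) \<le> \<rho> * hnorm2 E i (w1 - w0)"
    using \<rho> by (intro mult_right_mono) (simp_all add: hnorm2_def sum_nonneg)
  ultimately show ?thesis
    by linarith
qed

lemma sum_diff_le_by_descent:
  fixes x y p r :: "'i \<Rightarrow> real"
  assumes "(\<Sum>i\<in>I. p i) \<le> 0" and "\<And>i. i \<in> I \<Longrightarrow> x i - y i \<le> p i + r i"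
  shows "(\<Sum>i\<in>I. x i) - (\<Sum>i\<in>I. y i) \<le> (\<Sum>i\<in>I. r i)"
proof -
  have "(\<Sum>i\<in>I. x i) - (\<Sum>i\<in>I. y i) \<le> (\<Sum>i\<in>I. p i) + (\<Sum>i\<in>I. r i)"
    using assms(2) by (simp add: sum_subtractf[symmetric] sum.distrib[symmetric] sum_mono)
  with assms(1) show ?thesis by linarith
qed

lemma sp_admm_jcnl_w_update:
  "sp_admm_jcnl c \<rho> N E Anc a d rr z w l \<Longrightarrow> i \<in> {1..N} \<Longrightarrow>
    \<forall>k\<in>hblks E i. w (Suc t) i k = closest_point (cball 0 1)
      (w t i k + (1 / \<rho>) *\<^sub>R Dmul d rr i (Hmul E i (z (Suc t) i)) k)"
  unfolding sp_admm_jcnl_def by blast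

lemma sp_admm_jcnl_l_update:
  "sp_admm_jcnl c \<rho> N E Anc a d rr z w l \<Longrightarrow> i \<in> {1..N} \<Longrightarrow>
    \<forall>k\<in>ablks E i. l (Suc t) i k = l t i k + c *\<^sub>R Amul E i (z (Suc t) i) k"
  unfolding sp_admm_jcnl_def by blast

lemma sp_admm_jcnl_in_balls:
  assumes "sp_admm_jcnl c \<rho> N E Anc a d rr z w l" "i \<in> {1..N}" "t \<ge> 1"
  shows "in_balls E i (w t i)"
proof -
  obtain s where "t = Suc s"
    using assms(3) by (cases t) auto
  moreover have "norm (closest_point (cball 0 1) x) \<le> 1" for x :: "real^'n"
    using closest_point_in_set[of "cball (0::real^'n) 1" x] by auto
  ultimately show ?thesis
    using sp_admm_jcnl_w_update[OF assms(1,2), of s] unfolding in_balls_def by auto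
qed

text \<open>The initial point z^0 is arbitrary; only for t \<ge> 1 is z^t feasible for the z-subproblem,
  which is why the descent estimate starts at t = 1.\<close>

lemma sp_admm_jcnl_z_descent:
  assumes alg: "sp_admm_jcnl c \<rho> N E Anc a d rr z w l" and t: "t \<ge> 1"
  shows "(\<Sum>i\<in>{1..N}. Lsm c E d rr i (z (Suc t) i) (w t i) (l t i) - Lsm c E d rr i (z t i) (w t i) (l t i)
      + c / 2 * qform E i (Smat c E i) (z (Suc t) i - z t i)) \<le> 0"
proof -
  obtain s where "t = Suc s"
    using t by (cases t) auto
  then have "zobj c N E d rr (z t) (w t) (l t) (z (Suc t)) \<le> zobj c N E d rr (z t) (w t) (l t) (z t)"
    using alg unfolding sp_admm_jcnl_def by blast
  moreover have "qform E i M (z t i - z t i) = 0" for i M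
    by (simp add: qform_def)
  ultimately show ?thesis
    unfolding zobj_def by (simp add: sum.distrib sum_subtractf)
qed

theorem mainTheorem3:
  fixes c \<rho> :: real and N :: nat and E :: "(nat \<times> nat) set" and Anc :: "nat set"
    and a :: "nat \<Rightarrow> real^'n" and d :: "nat \<Rightarrow> nat \<Rightarrow> real" and rr :: "nat \<Rightarrow> real"
    and z :: "nat \<Rightarrow> nat \<Rightarrow> blk \<Rightarrow> real^'n" and w :: "nat \<Rightarrow> nat \<Rightarrow> hblk \<Rightarrow> real^'n"
    and l :: "nat \<Rightarrow> nat \<Rightarrow> ablk \<Rightarrow> real^'n" and t :: nat
  assumes graph: "E \<subseteq> {1..N} \<times> {1..N}" "sym E" "\<forall>i. (i, i) \<notin> E"
    and connected: "\<forall>i\<in>{1..N}. \<forall>j\<in>{1..N}. (i, j) \<in> E\<^sup>*"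
    and nbrs_ne: "\<forall>i\<in>{1..N}. nbrs E i \<noteq> {}"
    and anchors: "Anc \<subseteq> {1..N}" "Anc \<noteq> {}"
    and meas: "\<forall>i j. (i, j) \<in> E \<longrightarrow> d i j = d j i \<and> d i j \<ge> 0" "\<forall>i\<in>{1..N}. rr i \<ge> 0"
    and params: "c > 0" "\<rho> > 0"
    and alg: "sp_admm_jcnl c \<rho> N E Anc a d rr z w l"
    and t: "t \<ge> 1"
  shows
    "Lag c N E d rr (z (t+1)) (w (t+1)) (l (t+1)) - Lag c N E d rr (z t) (w t) (l t)
     \<le> ereal (\<Sum>i\<in>{1..N}.
        let Nmax = real (Max ((\<lambda>k. card (nbrs E k)) ` {1..N}));
            dz1 = z (t+1) i - z t i;
            dz0 = z t i - z (t-1) i;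
            dw1 = w (t+1) i - w t i;
            dw0 = w t i - w (t-1) i;
            dzt = ztil c E d rr i (z t i) (w t i) (l t i)
                  - ztil c E d rr i (z (t-1) i) (w (t-1) i) (l (t-1) i)
        in - c / 2 * qform E i (Smat c E i) dz1
           - \<rho> / 2 * hnorm2 E i dw1
           + 3 * (Nmax + 2) / c * hnorm2 E i (Hmul E i dzt - Dmul d rr i dw0)
           + 3 * c * (2 * Nmax + 1) * qform E i (AtA E i) (dzt - dz1)
           + 3 * (1 + 2 * c) * (2 + Nmax) * qform E i (Smat c E i) (dzt - dz0))"
proof -
  have t_pred: "Suc (t - 1) = t" and t_succ: "t + 1 = Suc t"
    using t by simp_all
  have Lag_diff: "Lag c N E d rr (z (Suc t)) (w (Suc t)) (l (Suc t)) - Lag c N E d rr (z t) (w t) (l t)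
      = ereal ((\<Sum>i\<in>{1..N}. Lsm c E d rr i (z (Suc t) i) (w (Suc t) i) (l (Suc t) i))
          - (\<Sum>i\<in>{1..N}. Lsm c E d rr i (z t i) (w t i) (l t i)))"
    unfolding Lag_def using sp_admm_jcnl_in_balls[OF alg] t by simp
  show ?thesis
    unfolding t_succ Lag_diff ereal_less_eq(3) Let_def
  proof (rule sum_diff_le_by_descent[OF sp_admm_jcnl_z_descent[OF alg t]], goal_cases)
    case (1 i)
    have "real (card (nbrs E i)) \<le> real (Max ((\<lambda>k. card (nbrs E k)) ` {1..N}))"
      using 1 by (intro of_nat_mono Max_ge) auto
    from Lsm_wl_step_le[OF finite_nbrs[OF graph(1)] params this
        sp_admm_jcnl_in_balls[OF alg 1 t] sp_admm_jcnl_w_update[OF alg 1]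
        sp_admm_jcnl_l_update[OF alg 1] sp_admm_jcnl_l_update[OF alg 1, of "t - 1", unfolded t_pred],
        where zm = "z (t - 1) i" and wm = "w (t - 1) i"]
    show ?case by linarith
  qed
qed

end
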